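(* Let $\alpha > 1$. (i) For integers $1 \le t \le k \le n$ with $t < n$, $\lambda_\alpha(S^k_{t,n}) = k!\binom{n-t}{k-t} k^{-k/\alpha}\left(\frac{k-t}{n-t}\right)^{(k-t)/\alpha}$ (with $0^0 = 1$). (ii) As $n\to\infty$, $\lambda_\alpha(B_n) = (1+O(n^{-2}))\, 6\, e(B_n)\, n^{-3/\alpha}$. (iii) For fixed $r \ge 2$, as $n \to\infty$, $\lambda_\alpha(T_{r,n}) = (1+O(n^{-2}))\, 2\, e(T_{r,n})\, n^{-2/\alpha}$.
   Context: $S^k_{t,n}$ is the $n$-vertex $k$-uniform hypergraph whose edges are all $k$-sets containing a fixed $t$-set of vertices (the complete $t$-star). $B_n$ is the $3$-uniform hypergraph on $n$ vertices split into parts of sizes $\lfloor n/2\rfloor$ and $\lceil n/2\rceil$, whose edges are all triples meeting both parts. $T_{r,n}$ is the complete $r$-partite graph on $n$ vertices with part sizes as equal as possible. $e(\cdot)$ is the number of edges. For a $k$-uniform hypergraph $H$ on $[n]$, $\lambda_\alpha(H) = \max\{k!\sum_{\{i_1,\dots,i_k\}\in E(H)}x_{i_1}\cdots x_{i_k} : x\in\mathbb{R}^n,\ \|x\|_\alpha = 1\}$ where $\|x\|_\alpha = (\sum_i|x_i|^\alpha)^{1/\alpha}$; graphs are the case $k=2$. The implied constants in $O(\cdot)$ may depend on $\alpha$ (and $r$). *)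

theory Defs
  imports "HOL-Analysis.Analysis" "HOL-Library.Landau_Symbols"
begin

text \<open>A k-uniform hypergraph on the vertex set [n] = {0..<n} is given by its edge set,
  a set of k-subsets of {0..<n}. Vectors x in R^n are functions nat => real; only the
  coordinates below n matter.\<close>

definition alpha_norm :: "real \<Rightarrow> nat \<Rightarrow> (nat \<Rightarrow> real) \<Rightarrow> real" where
  "alpha_norm \<alpha> n x = (\<Sum>i<n. \<bar>x i\<bar> powr \<alpha>) powr (1 / \<alpha>)"

definition lambda_alpha :: "real \<Rightarrow> nat \<Rightarrow> nat \<Rightarrow> nat set set \<Rightarrow> real" where
  "lambda_alpha \<alpha> n k E =
     Sup {fact k * (\<Sum>e\<in>E. \<Prod>i\<in>e. x i) | x. alpha_norm \<alpha> n x = 1}"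

definition star_edges :: "nat \<Rightarrow> nat \<Rightarrow> nat \<Rightarrow> nat set set" where
  "star_edges k t n = {e. e \<subseteq> {..<n} \<and> card e = k \<and> {..<t} \<subseteq> e}"

definition B_edges :: "nat \<Rightarrow> nat set set" where
  "B_edges n = {e. e \<subseteq> {..<n} \<and> card e = 3 \<and>
                   e \<inter> {..<n div 2} \<noteq> {} \<and> e \<inter> {n div 2..<n} \<noteq> {}}"

text \<open>Turan graph T_{r,n}: vertex i lies in part (i mod r); part sizes are as equal as
  possible. Edges are pairs from different parts.\<close>
definition turan_edges :: "nat \<Rightarrow> nat \<Rightarrow> nat set set" where
  "turan_edges r n = {e. e \<subseteq> {..<n} \<and> card e = 2 \<and>
                         (\<exists>i\<in>e. \<exists>j\<in>e. i mod r \<noteq> j mod r)}"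

end

theory Submission
  imports Defs
begin

text \<open>Writing \<open>z\<^sub>i = \<bar>x\<^sub>i\<bar>\<^sup>\<alpha>\<close> maps the unit \<open>\<alpha>\<close>-sphere onto the standard simplex, and
  the power-mean inequality over the edges gives
  \<open>\<lambda>\<^sub>\<alpha>(H) \<le> k! \<bar>E\<bar>\<^sup>1\<^sup>-\<^sup>1\<^sup>/\<^sup>\<alpha> \<Lambda>\<^sup>1\<^sup>/\<^sup>\<alpha>\<close> whenever \<open>\<Lambda>\<close> bounds the Lagrangian
  \<open>\<Sum>\<^sub>e \<Prod>\<^sub>i\<^sub>\<in>\<^sub>e z\<^sub>i\<close> on the simplex. For the star, Maclaurin's inequality on the
  vertices outside the centre followed by AM-GM gives \<open>\<Lambda>\<close>, and the point where both are tight,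
  pulled back to the sphere, also makes the power-mean inequality tight, since all its edge products
  are equal. For \<open>B\<^sub>n\<close> and \<open>T\<^sub>r\<^sub>,\<^sub>n\<close> the uniform vector gives the lower bound
  \<open>k! \<bar>E\<bar> n\<^sup>-\<^sup>k\<^sup>/\<^sup>\<alpha>\<close>; writing the Lagrangian through the part sums and power sums,
  Cauchy-Schwarz shows \<open>\<Lambda> \<le> (1 + O(n\<^sup>-\<^sup>2)) \<bar>E\<bar> / n\<^sup>k\<close>, which matches it.\<close>

section \<open>Lagrangians and \<open>\<lambda>\<^sub>\<alpha>\<close>\<close>

definition lagrangian :: "nat set set \<Rightarrow> (nat \<Rightarrow> real) \<Rightarrow> real" where
  "lagrangian E x = (\<Sum>e\<in>E. \<Prod>i\<in>e. x i)"

definition lagrangian_bounded :: "nat \<Rightarrow> nat set set \<Rightarrow> real \<Rightarrow> bool" where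
  "lagrangian_bounded n E \<Lambda> \<longleftrightarrow>
     (\<forall>z. (\<forall>i. 0 \<le> z i) \<longrightarrow> (\<Sum>i<n. z i) = 1 \<longrightarrow> lagrangian E z \<le> \<Lambda>)"

lemma sum_le_power_mean:
  fixes a :: "'e \<Rightarrow> real" and \<alpha> :: real
  assumes fin: "finite E" and nn: "\<And>e. e \<in> E \<Longrightarrow> a e \<ge> 0" and al: "\<alpha> \<ge> 1"
  shows "sum a E \<le> real (card E) powr (1 - 1/\<alpha>) * (\<Sum>e\<in>E. a e powr \<alpha>) powr (1/\<alpha>)"
proof -
  define P where "P = {e\<in>E. a e > 0}"
  have PE: "P \<subseteq> E" and finP: "finite P" using fin by (auto simp: P_def)
  have s1: "sum a E = sum a P"
    by (rule sum.mono_neutral_right[OF fin PE]) (use nn in \<open>force simp: P_def\<close>)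
  have s2: "(\<Sum>e\<in>E. a e powr \<alpha>) = (\<Sum>e\<in>P. a e powr \<alpha>)"
    by (rule sum.mono_neutral_right[OF fin PE]) (use nn in \<open>force simp: P_def\<close>)
  show ?thesis
  proof (cases "P = {}")
    case True
    then show ?thesis using s1 by simp
  next
    case False
    define p where "p = real (card P)"
    define S where "S = (\<Sum>e\<in>P. a e powr \<alpha>)"
    have pp: "p > 0" using False finP by (simp add: p_def card_gt_0_iff)
    have pN: "p \<le> real (card E)" unfolding p_def using card_mono[OF fin PE] by simp
    have S0: "S \<ge> 0" unfolding S_def by (simp add: sum_nonneg)
    have "(\<Sum>e\<in>P. (1/p) *\<^sub>R a e) powr \<alpha> \<le> (\<Sum>e\<in>P. (1/p) * a e powr \<alpha>)"
      by (rule convex_on_sum[OF finP False powr_convex[OF al]])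
         (use pp in \<open>auto simp: P_def p_def\<close>)
    then have jensen: "(sum a P / p) powr \<alpha> \<le> S / p"
      by (simp add: S_def sum_divide_distrib[symmetric] sum_distrib_left[symmetric] field_simps)
    have m0: "sum a P / p \<ge> 0" using pp PE nn by (intro divide_nonneg_pos sum_nonneg) auto
    have "sum a P / p = ((sum a P / p) powr \<alpha>) powr (1/\<alpha>)"
      using al m0 by (simp add: powr_powr del: abs_divide)
    also have "\<dots> \<le> (S/p) powr (1/\<alpha>)"
      by (rule powr_mono2) (use jensen al in auto)
    finally have "sum a P \<le> p * (S/p) powr (1/\<alpha>)" using pp by (simp add: field_simps)
    also have "\<dots> = p powr (1 - 1/\<alpha>) * S powr (1/\<alpha>)"
      using pp S0 by (simp add: powr_divide powr_diff field_simps)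
    also have "\<dots> \<le> real (card E) powr (1 - 1/\<alpha>) * S powr (1/\<alpha>)"
      by (rule mult_right_mono, rule powr_mono2) (use pN pp al in auto)
    finally show ?thesis using s1 s2 S_def by simp
  qed
qed

lemma alpha_norm_eq_1_iff:
  assumes "\<alpha> > 0"
  shows "alpha_norm \<alpha> n x = 1 \<longleftrightarrow> (\<Sum>i<n. \<bar>x i\<bar> powr \<alpha>) = 1"
proof -
  define S where "S = (\<Sum>i<n. \<bar>x i\<bar> powr \<alpha>)"
  have S0: "S \<ge> 0" by (simp add: S_def sum_nonneg)
  have "S powr (1/\<alpha>) = 1 \<longleftrightarrow> S = 1"
  proof
    assume h: "S powr (1/\<alpha>) = 1"
    then have "S \<noteq> 0" by auto
    then have "S = (S powr (1/\<alpha>)) powr \<alpha>" using S0 assms by (simp add: powr_powr)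
    then show "S = 1" using h by simp
  qed simp
  then show ?thesis by (simp add: alpha_norm_def S_def)
qed

lemma lagrangian_le_of_bounded:
  fixes \<alpha> \<Lambda> :: real
  assumes al: "\<alpha> > 1" and fin: "finite E" and bd: "lagrangian_bounded n E \<Lambda>"
    and x: "alpha_norm \<alpha> n x = 1"
  shows "lagrangian E x \<le> real (card E) powr (1 - 1/\<alpha>) * \<Lambda> powr (1/\<alpha>)"
proof -
  define z where "z i = \<bar>x i\<bar> powr \<alpha>" for i
  have z0: "\<forall>i. 0 \<le> z i" by (simp add: z_def)
  have "(\<Sum>i<n. z i) = 1" using x alpha_norm_eq_1_iff[of \<alpha> n x] al by (simp add: z_def)
  then have z\<Lambda>: "lagrangian E z \<le> \<Lambda>" using bd z0 by (simp add: lagrangian_bounded_def)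
  have "lagrangian E x \<le> (\<Sum>e\<in>E. \<bar>\<Prod>i\<in>e. x i\<bar>)"
    unfolding lagrangian_def by (rule order_trans[OF abs_ge_self sum_abs])
  also have "\<dots> = (\<Sum>e\<in>E. \<Prod>i\<in>e. \<bar>x i\<bar>)" by (simp add: abs_prod)
  also have "\<dots> \<le> real (card E) powr (1 - 1/\<alpha>) * (\<Sum>e\<in>E. (\<Prod>i\<in>e. \<bar>x i\<bar>) powr \<alpha>) powr (1/\<alpha>)"
    by (rule sum_le_power_mean[OF fin]) (use al in \<open>auto simp: prod_nonneg\<close>)
  also have "(\<Sum>e\<in>E. (\<Prod>i\<in>e. \<bar>x i\<bar>) powr \<alpha>) = lagrangian E z"
    by (simp add: lagrangian_def prod_powr_distrib z_def)
  also have "real (card E) powr (1 - 1/\<alpha>) * lagrangian E z powr (1/\<alpha>)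
      \<le> real (card E) powr (1 - 1/\<alpha>) * \<Lambda> powr (1/\<alpha>)"
    by (intro mult_left_mono powr_mono2)
       (use al z\<Lambda> z0 in \<open>auto simp: lagrangian_def sum_nonneg prod_nonneg\<close>)
  finally show ?thesis .
qed

lemma lambda_alpha_bounds:
  fixes \<alpha> \<Lambda> :: real
  assumes al: "\<alpha> > 1" and fin: "finite E" and bd: "lagrangian_bounded n E \<Lambda>"
    and x: "alpha_norm \<alpha> n x = 1"
  shows "fact k * lagrangian E x \<le> lambda_alpha \<alpha> n k E"
    and "lambda_alpha \<alpha> n k E \<le> fact k * (real (card E) powr (1 - 1/\<alpha>) * \<Lambda> powr (1/\<alpha>))"
proof -
  define X where "X = {fact k * lagrangian E y | y. alpha_norm \<alpha> n y = 1}"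
  have L: "lambda_alpha \<alpha> n k E = Sup X"
    by (simp add: lambda_alpha_def X_def lagrangian_def)
  have ub: "v \<le> fact k * (real (card E) powr (1 - 1/\<alpha>) * \<Lambda> powr (1/\<alpha>))" if "v \<in> X" for v
    using that lagrangian_le_of_bounded[OF al fin bd] by (auto simp: X_def)
  have mem: "fact k * lagrangian E x \<in> X" unfolding X_def using x by blast
  show "fact k * lagrangian E x \<le> lambda_alpha \<alpha> n k E"
    unfolding L by (rule cSup_upper[OF mem]) (use ub in \<open>intro bdd_aboveI\<close>)
  show "lambda_alpha \<alpha> n k E \<le> fact k * (real (card E) powr (1 - 1/\<alpha>) * \<Lambda> powr (1/\<alpha>))"
    unfolding L using mem ub by (intro cSup_least) auto
qed

lemma alpha_norm_uniform:
  assumes "\<alpha> > 1" "n > 0"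
  shows "alpha_norm \<alpha> n (\<lambda>i. real n powr (-1/\<alpha>)) = 1"
proof -
  have "(\<Sum>i<n. \<bar>real n powr (-1/\<alpha>)\<bar> powr \<alpha>) = real n * real n powr (-1)"
    using assms by (simp add: powr_powr)
  also have "\<dots> = 1" using assms by (simp add: powr_minus)
  finally show ?thesis using alpha_norm_eq_1_iff[of \<alpha> n] assms by simp
qed

lemma lagrangian_const:
  assumes "\<forall>e\<in>E. card e = k"
  shows "lagrangian E (\<lambda>i. c) = real (card E) * c ^ k"
  using assms by (simp add: lagrangian_def)

text \<open>The uniform vector gives the lower bound; the upper bound only needs the Lagrangian to be
  within a factor \<open>1 + c\<close> of its value \<open>\<bar>E\<bar> / n\<^sup>k\<close> at the barycentre.\<close>
lemma lambda_alpha_near_uniform: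
  fixes \<alpha> \<Lambda> c :: real
  assumes al: "\<alpha> > 1" and fin: "finite E" and unif: "\<forall>e\<in>E. card e = k"
    and n: "n > 0" and E: "card E > 0" and bd: "lagrangian_bounded n E \<Lambda>" and \<Lambda>0: "\<Lambda> \<ge> 0"
    and c: "c \<ge> 0" and near: "\<Lambda> * real n ^ k \<le> real (card E) * (1 + c)"
  defines "T \<equiv> fact k * real (card E) * real n powr (- real k / \<alpha>)"
  shows "T \<le> lambda_alpha \<alpha> n k E" and "lambda_alpha \<alpha> n k E \<le> T * (1 + c)"
proof -
  define \<gamma> where "\<gamma> = 1 / \<alpha>"
  define N where "N = real (card E)"
  have \<gamma>: "0 < \<gamma>" "\<gamma> \<le> 1" using al by (auto simp: \<gamma>_def)
  have npos: "real n > 0" and N: "N > 0" using n E by (auto simp: N_def)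
  have npow: "(real n ^ k) powr (- \<gamma>) = real n powr (- real k / \<alpha>)"
    using npos by (simp add: powr_realpow[symmetric] powr_powr \<gamma>_def)
  have "(real n powr (-1/\<alpha>)) ^ k = real n powr (- real k / \<alpha>)"
    using npos by (simp add: powr_power)
  then show "T \<le> lambda_alpha \<alpha> n k E"
    using lambda_alpha_bounds(1)[OF al fin bd alpha_norm_uniform[OF al n], of k]
    by (simp add: lagrangian_const[OF unif] T_def)
  have "\<Lambda> \<le> N * (1 + c) / real n ^ k" using near npos by (simp add: N_def field_simps)
  then have "\<Lambda> powr \<gamma> \<le> (N * (1 + c) / real n ^ k) powr \<gamma>" using \<Lambda>0 \<gamma> by (intro powr_mono2) auto
  also have "\<dots> = N powr \<gamma> * (1 + c) powr \<gamma> * (real n ^ k) powr (- \<gamma>)"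
    using N npos c by (simp add: powr_mult powr_divide powr_minus_divide)
  also have "\<dots> \<le> N powr \<gamma> * (1 + c) * (real n ^ k) powr (- \<gamma>)"
  proof -
    have "(1 + c) powr \<gamma> \<le> (1 + c) powr 1" using c \<gamma> by (intro powr_mono) auto
    then show ?thesis using c by (intro mult_right_mono mult_left_mono) auto
  qed
  finally have "N powr (1 - \<gamma>) * \<Lambda> powr \<gamma> \<le> N powr (1 - \<gamma>) * (N powr \<gamma> * (1 + c) * (real n ^ k) powr (- \<gamma>))"
    by (rule mult_left_mono) simp
  also have "\<dots> = (N powr (1 - \<gamma>) * N powr \<gamma>) * (1 + c) * (real n ^ k) powr (- \<gamma>)"
    by (simp only: mult_ac)
  also have "N powr (1 - \<gamma>) * N powr \<gamma> = N" using N by (simp add: powr_add[symmetric])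
  finally have "fact k * (N powr (1 - \<gamma>) * \<Lambda> powr \<gamma>) \<le> T * (1 + c)"
    by (simp add: T_def N_def npow mult_left_mono mult_ac)
  then show "lambda_alpha \<alpha> n k E \<le> T * (1 + c)"
    using lambda_alpha_bounds(2)[OF al fin bd alpha_norm_uniform[OF al n], of k]
    by (simp add: \<gamma>_def N_def)
qed

lemma relative_error_bigo:
  fixes L T :: "nat \<Rightarrow> real" and c :: real
  assumes bounds: "\<And>n. n \<ge> n\<^sub>0 \<Longrightarrow> T n > 0 \<and> T n \<le> L n \<and> L n \<le> T n * (1 + c / real n ^ 2)"
    and c: "c \<ge> 0"
  shows "\<exists>g. g \<in> O(\<lambda>n. 1 / real n ^ 2) \<and> (\<forall>\<^sub>F n in sequentially. L n = (1 + g n) * T n)"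
proof (intro exI conjI)
  have ev: "\<forall>\<^sub>F n in sequentially. n \<ge> max n\<^sub>0 1" by (rule eventually_ge_at_top)
  show "\<forall>\<^sub>F n in sequentially. L n = (1 + (L n / T n - 1)) * T n"
    using ev by eventually_elim (use bounds in \<open>force simp: field_simps\<close>)
  show "(\<lambda>n. L n / T n - 1) \<in> O(\<lambda>n. 1 / real n ^ 2)"
  proof (rule bigoI[where c = c])
    show "\<forall>\<^sub>F n in sequentially. norm (L n / T n - 1) \<le> c * norm (1 / real n ^ 2)"
      using ev
    proof eventually_elim
      case (elim n)
      then have "T n > 0" "T n \<le> L n" "L n \<le> T n * (1 + c / real n ^ 2)" using bounds by auto
      then have "1 \<le> L n / T n" "L n / T n \<le> 1 + c / real n ^ 2" by (simp_all add: field_simps)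
      then show ?case by simp
    qed
  qed
qed

lemma lambda_alpha_asymp_near_uniform:
  fixes \<alpha> c :: real and E :: "nat \<Rightarrow> nat set set" and \<Lambda> :: "nat \<Rightarrow> real"
  assumes al: "\<alpha> > 1" and c: "c \<ge> 0"
    and H: "\<And>n. n \<ge> n\<^sub>0 \<Longrightarrow> n > 0 \<and> finite (E n) \<and> (\<forall>e\<in>E n. card e = k) \<and> card (E n) > 0
              \<and> lagrangian_bounded n (E n) (\<Lambda> n) \<and> \<Lambda> n \<ge> 0
              \<and> \<Lambda> n * real n ^ k \<le> real (card (E n)) * (1 + c / real n ^ 2)"
  shows "\<exists>g. g \<in> O(\<lambda>n. 1 / real n ^ 2) \<and> (\<forall>\<^sub>F n in sequentially.
           lambda_alpha \<alpha> n k (E n) = (1 + g n) * (fact k * real (card (E n)) * real n powr (- real k / \<alpha>)))"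
proof (rule relative_error_bigo[OF _ c])
  fix n assume "n \<ge> n\<^sub>0"
  with H have "n > 0" "finite (E n)" "\<forall>e\<in>E n. card e = k" "card (E n) > 0"
    "lagrangian_bounded n (E n) (\<Lambda> n)" "\<Lambda> n \<ge> 0"
    "\<Lambda> n * real n ^ k \<le> real (card (E n)) * (1 + c / real n ^ 2)" by auto
  note near = lambda_alpha_near_uniform[OF al this(2,3,1,4,5,6) _ this(7)]
  show "fact k * real (card (E n)) * real n powr (- real k / \<alpha>) > 0 \<and>
        fact k * real (card (E n)) * real n powr (- real k / \<alpha>) \<le> lambda_alpha \<alpha> n k (E n) \<and>
        lambda_alpha \<alpha> n k (E n) \<le> fact k * real (card (E n)) * real n powr (- real k / \<alpha>) * (1 + c / real n ^ 2)"
    using near c \<open>card (E n) > 0\<close> \<open>n > 0\<close> by simp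
qed

section \<open>Elementary symmetric polynomials and mean inequalities\<close>

definition esym :: "(nat \<Rightarrow> real) \<Rightarrow> nat set \<Rightarrow> nat \<Rightarrow> real" where
  "esym z S j = (\<Sum>F\<in>{F. F \<subseteq> S \<and> card F = j}. \<Prod>i\<in>F. z i)"

lemma esym_0: "finite S \<Longrightarrow> esym z S 0 = 1"
proof -
  assume "finite S"
  then have "{F. F \<subseteq> S \<and> card F = 0} = {{}}" by (auto dest: finite_subset)
  then show ?thesis by (simp add: esym_def)
qed

lemma esym_empty_Suc: "esym z {} (Suc j) = 0"
  by (simp add: esym_def)

lemma subsets_insert_card_Suc:
  assumes "finite S" "a \<notin> S"
  shows "{F. F \<subseteq> insert a S \<and> card F = Suc j} =
         {F. F \<subseteq> S \<and> card F = Suc j} \<union> insert a ` {F. F \<subseteq> S \<and> card F = j}"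
proof (intro equalityI subsetI)
  fix F assume F: "F \<in> {F. F \<subseteq> insert a S \<and> card F = Suc j}"
  show "F \<in> {F. F \<subseteq> S \<and> card F = Suc j} \<union> insert a ` {F. F \<subseteq> S \<and> card F = j}"
  proof (cases "a \<in> F")
    case True
    have "finite F" using F assms(1) finite_subset by auto
    then have "F = insert a (F - {a})" "F - {a} \<subseteq> S" "card (F - {a}) = j" using F True by auto
    then show ?thesis by blast
  next
    case False
    then show ?thesis using F by auto
  qed
next
  fix F assume "F \<in> {F. F \<subseteq> S \<and> card F = Suc j} \<union> insert a ` {F. F \<subseteq> S \<and> card F = j}"
  then show "F \<in> {F. F \<subseteq> insert a S \<and> card F = Suc j}"
    using assms by auto (metis card_insert_disjoint finite_subset subsetD)
qed

lemma esym_insert_Suc: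
  assumes "finite S" "a \<notin> S"
  shows "esym z (insert a S) (Suc j) = esym z S (Suc j) + z a * esym z S j"
proof -
  let ?A = "{F. F \<subseteq> S \<and> card F = Suc j}" and ?B = "{F. F \<subseteq> S \<and> card F = j}"
  have inj: "inj_on (insert a) ?B" using assms(2) by (auto simp: inj_on_def)
  have "esym z (insert a S) (Suc j) = esym z S (Suc j) + (\<Sum>F\<in>insert a ` ?B. \<Prod>i\<in>F. z i)"
    unfolding esym_def subsets_insert_card_Suc[OF assms]
    by (rule sum.union_disjoint) (use assms in auto)
  also have "(\<Sum>F\<in>insert a ` ?B. \<Prod>i\<in>F. z i) = (\<Sum>F\<in>?B. \<Prod>i\<in>insert a F. z i)"
    by (rule sum.reindex[OF inj, unfolded comp_def])
  also have "\<dots> = (\<Sum>F\<in>?B. z a * (\<Prod>i\<in>F. z i))"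
    by (rule sum.cong) (use assms in \<open>auto dest: finite_subset intro!: prod.insert\<close>)
  also have "\<dots> = z a * esym z S j" by (simp add: esym_def sum_distrib_left)
  finally show ?thesis .
qed

lemma esym_1: "finite S \<Longrightarrow> esym z S 1 = sum z S"
  by (induction S rule: finite_induct)
     (auto simp: esym_empty_Suc[of z 0, simplified] esym_insert_Suc[of _ _ z 0, simplified] esym_0)

lemma esym_2: "finite S \<Longrightarrow> 2 * esym z S 2 = (sum z S)^2 - (\<Sum>i\<in>S. z i ^ 2)"
proof (induction S rule: finite_induct)
  case empty
  then show ?case using esym_empty_Suc[of z 1] by (simp add: numeral_2_eq_2)
next
  case (insert a S)
  have "esym z (insert a S) 2 = esym z S 2 + z a * esym z S 1"
    using esym_insert_Suc[OF insert(1,2), of z 1] by (simp add: numeral_2_eq_2)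
  then show ?case using insert esym_1[OF insert(1)] by (simp add: algebra_simps power2_eq_square)
qed

lemma esym_3:
  "finite S \<Longrightarrow>
   6 * esym z S 3 = (sum z S)^3 - 3 * sum z S * (\<Sum>i\<in>S. z i ^ 2) + 2 * (\<Sum>i\<in>S. z i ^ 3)"
proof (induction S rule: finite_induct)
  case empty
  then show ?case using esym_empty_Suc[of z 2] by (simp add: numeral_3_eq_3)
next
  case (insert a S)
  have "esym z (insert a S) 3 = esym z S 3 + z a * esym z S 2"
    using esym_insert_Suc[OF insert(1,2), of z 2] by (simp add: numeral_3_eq_3 numeral_2_eq_2)
  moreover have "esym z S 2 = ((sum z S)^2 - (\<Sum>i\<in>S. z i ^ 2)) / 2"
    using esym_2[OF insert(1), of z] by simp
  ultimately show ?case using insert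
    by (simp add: algebra_simps power2_eq_square power3_eq_cube) (simp add: field_simps)
qed

lemma power_ge_tangent:
  fixes t u :: real
  assumes "t \<ge> 0" "u \<ge> 0"
  shows "t ^ Suc i \<ge> u ^ Suc i + real (Suc i) * u ^ i * (t - u)"
proof (induction i)
  case 0
  then show ?case by simp
next
  case (Suc i)
  have "t ^ Suc (Suc i) \<ge> t * (u ^ Suc i + real (Suc i) * u ^ i * (t - u))"
    using Suc assms(1) by (simp add: mult_left_mono)
  moreover have "t * (u ^ Suc i + real (Suc i) * u ^ i * (t - u))
      = u ^ Suc (Suc i) + real (Suc (Suc i)) * u ^ Suc i * (t - u) + real (Suc i) * u ^ i * (t - u)^2"
    by (simp add: algebra_simps power2_eq_square)
  moreover have "real (Suc i) * u ^ i * (t - u)^2 \<ge> 0" using assms by simp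
  ultimately show ?case by linarith
qed

text \<open>Adding a vertex of weight \<open>z\<close> to \<open>m\<close> vertices of mean weight \<open>u\<close>: the tangent of
  \<open>x\<^sup>i\<^sup>+\<^sup>1\<close> at \<open>u\<close>, weighted by Pascal's rule, absorbs the new terms.\<close>
lemma maclaurin_step:
  fixes u z :: real
  assumes u: "u \<ge> 0" and z: "z \<ge> 0"
  shows "real (m choose Suc i) * u ^ Suc i + z * (real (m choose i) * u ^ i)
         \<le> real (Suc m choose Suc i) * ((z + real m * u) / real (Suc m)) ^ Suc i"
proof -
  define t where "t = (z + real m * u) / real (Suc m)"
  have t0: "t \<ge> 0" using z u by (simp add: t_def)
  have binom: "real (Suc m choose Suc i) * real (Suc i) = real (Suc m) * real (m choose i)"
    using Suc_times_binomial_eq[of m i] by (metis of_nat_mult)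
  have "real (Suc m choose Suc i) * (real (Suc i) * u ^ i * (t - u))
       = (real (Suc m choose Suc i) * real (Suc i)) * u ^ i * ((z - u) / real (Suc m))"
    by (simp add: t_def field_simps)
  also have "\<dots> = real (m choose i) * u ^ i * (z - u)"
    unfolding binom by (simp add: field_simps)
  finally have "real (m choose Suc i) * u ^ Suc i + z * (real (m choose i) * u ^ i)
      = real (Suc m choose Suc i) * (u ^ Suc i + real (Suc i) * u ^ i * (t - u))"
    by (simp add: algebra_simps)
  also have "\<dots> \<le> real (Suc m choose Suc i) * t ^ Suc i"
    by (rule mult_left_mono[OF power_ge_tangent[OF t0 u]]) simp
  finally show ?thesis by (simp add: t_def)
qed

lemma esym_le_maclaurin:
  assumes "finite S" "\<And>i. i \<in> S \<Longrightarrow> z i \<ge> 0"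
  shows "esym z S j \<le> real (card S choose j) * (sum z S / real (card S)) ^ j"
  using assms
proof (induction S arbitrary: j rule: finite_induct)
  case empty
  then show ?case by (cases j) (auto simp: esym_0 esym_empty_Suc)
next
  case (insert a S)
  show ?case
  proof (cases j)
    case 0
    then show ?thesis using insert by (simp add: esym_0)
  next
    case (Suc i)
    define m where "m = card S"
    define u where "u = sum z S / real m"
    have u0: "u \<ge> 0" using insert by (simp add: u_def sum_nonneg)
    have su: "sum z S = real m * u"
      by (cases "m = 0") (use insert in \<open>auto simp: u_def m_def\<close>)
    have IH: "esym z S l \<le> real (m choose l) * u ^ l" for l
      using insert by (simp add: m_def u_def)
    have "esym z (insert a S) j = esym z S (Suc i) + z a * esym z S i"
      using esym_insert_Suc[OF insert(1,2)] Suc by simp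
    also have "\<dots> \<le> real (m choose Suc i) * u ^ Suc i + z a * (real (m choose i) * u ^ i)"
      by (intro add_mono mult_left_mono IH) (use insert(4) in auto)
    also have "\<dots> \<le> real (Suc m choose Suc i) * ((z a + real m * u) / real (Suc m)) ^ Suc i"
      by (rule maclaurin_step[OF u0]) (use insert in simp)
    also have "\<dots> = real (card (insert a S) choose j) * (sum z (insert a S) / real (card (insert a S))) ^ j"
      using insert Suc su by (simp add: m_def)
    finally show ?thesis .
  qed
qed

lemma prod_le_mean_power:
  fixes w :: "nat \<Rightarrow> real"
  assumes "k > 0" "\<And>i. i < k \<Longrightarrow> w i \<ge> 0"
  shows "(\<Prod>i<k. w i) \<le> ((\<Sum>i<k. w i) / real k) ^ k"
proof -
  define P where "P = (\<Prod>i<k. w i)"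
  have P0: "P \<ge> 0" unfolding P_def using assms by (intro prod_nonneg) auto
  have "P powr (1 / real (card {..<k})) \<le> (\<Sum>i\<in>{..<k}. w i / real (card {..<k}))"
    unfolding P_def by (rule arith_geom_mean) (use assms in auto)
  then have mean: "P powr (1 / real k) \<le> (\<Sum>i<k. w i) / real k" by (simp add: sum_divide_distrib)
  have "P = (P powr (1 / real k)) ^ k"
    using P0 assms(1) by (cases "P = 0") (auto simp: powr_power)
  also have "\<dots> \<le> ((\<Sum>i<k. w i) / real k) ^ k" by (rule power_mono[OF mean]) simp
  finally show ?thesis by (simp add: P_def)
qed

text \<open>AM-GM with the last \<open>k - t\<close> weights all equal to \<open>s / (k - t)\<close>.\<close>
lemma prod_times_mean_power_le:
  fixes z :: "nat \<Rightarrow> real"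
  assumes k: "0 < k" "t \<le> k" and z: "\<forall>i. 0 \<le> z i" and s: "0 \<le> s"
    and total: "(\<Sum>i<t. z i) + s \<le> 1"
  shows "(\<Prod>i<t. z i) * (s / real (k - t)) ^ (k - t) \<le> (1 / real k) ^ k"
proof -
  define w where "w i = (if i < t then z i else s / real (k - t))" for i
  have w0: "\<And>i. w i \<ge> 0" using z s by (simp add: w_def)
  have kk: "{..<k} = {..<t} \<union> {t..<k}" using k by auto
  have "(\<Prod>i<k. w i) = (\<Prod>i<t. z i) * (s / real (k - t)) ^ (k - t)"
    unfolding kk by (subst prod.union_disjoint) (auto simp: w_def simp del: of_nat_diff)
  moreover have "(\<Sum>i<k. w i) \<le> 1"
  proof -
    have "(\<Sum>i<k. w i) = (\<Sum>i<t. z i) + real (k - t) * (s / real (k - t))"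
      unfolding kk by (subst sum.union_disjoint) (auto simp: w_def simp del: of_nat_diff)
    moreover have "real (k - t) * (s / real (k - t)) \<le> s" using s by (cases "k = t") auto
    ultimately have "(\<Sum>i<k. w i) \<le> (\<Sum>i<t. z i) + s" by simp
    then show ?thesis using total by linarith
  qed
  moreover have "(\<Prod>i<k. w i) \<le> ((\<Sum>i<k. w i) / real k) ^ k"
    by (rule prod_le_mean_power) (use k w0 in auto)
  moreover have "((\<Sum>i<k. w i) / real k) ^ k \<le> (1 / real k) ^ k" if "(\<Sum>i<k. w i) \<le> 1"
    using that w0 k by (intro power_mono divide_right_mono divide_nonneg_pos sum_nonneg) auto
  ultimately show ?thesis by linarith
qed

lemma sum_squared_div_le_sum_of_squares:
  fixes f :: "'a \<Rightarrow> real"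
  assumes "0 < N" "real (card I) \<le> N"
  shows "(\<Sum>i\<in>I. f i)^2 / N \<le> (\<Sum>i\<in>I. (f i)^2)"
proof -
  have "(\<Sum>i\<in>I. f i)^2 \<le> (\<Sum>i\<in>I. (f i)^2) * real (card I)"
    by (rule sum_squared_le_sum_of_squares)
  also have "\<dots> \<le> (\<Sum>i\<in>I. (f i)^2) * N" using assms by (intro mult_left_mono sum_nonneg) auto
  finally show ?thesis using assms by (simp add: field_simps)
qed

section \<open>Complete stars\<close>

text \<open>The point of the simplex where Maclaurin's inequality and AM-GM are both tight: weight
  \<open>1/k\<close> on the centre and \<open>(k - t) / (k (n - t))\<close> elsewhere, mapped back to the unit
  \<open>\<alpha>\<close>-sphere.\<close>
definition star_vector :: "real \<Rightarrow> nat \<Rightarrow> nat \<Rightarrow> nat \<Rightarrow> nat \<Rightarrow> real" where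
  "star_vector \<alpha> k t n i =
     (if i < t then 1 / real k else real (k - t) / (real k * real (n - t))) powr (1 / \<alpha>)"

context
  fixes k t n :: nat
  assumes tk: "1 \<le> t" "t \<le> k" "k \<le> n" "t < n"
begin

lemma star_edges_eq_image:
  "star_edges k t n = (\<lambda>F. {..<t} \<union> F) ` {F. F \<subseteq> {t..<n} \<and> card F = k - t}"
proof (intro equalityI subsetI)
  fix e assume "e \<in> star_edges k t n"
  then have e: "e \<subseteq> {..<n}" "card e = k" "{..<t} \<subseteq> e" by (auto simp: star_edges_def)
  then have "finite e" using finite_subset by blast
  then have "e - {..<t} \<subseteq> {t..<n}" "card (e - {..<t}) = k - t" "e = {..<t} \<union> (e - {..<t})"
    using e by (auto simp: card_Diff_subset)
  then show "e \<in> (\<lambda>F. {..<t} \<union> F) ` {F. F \<subseteq> {t..<n} \<and> card F = k - t}" by blast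
next
  fix e assume "e \<in> (\<lambda>F. {..<t} \<union> F) ` {F. F \<subseteq> {t..<n} \<and> card F = k - t}"
  then obtain F where F: "F \<subseteq> {t..<n}" "card F = k - t" "e = {..<t} \<union> F" by blast
  have "finite F" using F(1) finite_subset by blast
  then have "card e = t + (k - t)" using F by (subst F(3), subst card_Un_disjoint) auto
  then show "e \<in> star_edges k t n" using F tk by (auto simp: star_edges_def)
qed

lemma inj_on_star_union: "inj_on (\<lambda>F. {..<t} \<union> F) {F. F \<subseteq> {t..<n} \<and> card F = k - t}"
proof (rule inj_onI)
  fix F G assume "F \<in> {F. F \<subseteq> {t..<n} \<and> card F = k - t}" "G \<in> {F. F \<subseteq> {t..<n} \<and> card F = k - t}"
    "{..<t} \<union> F = {..<t} \<union> G"
  then show "F = G" by (auto simp: set_eq_iff) (metis atLeastLessThan_iff leD lessThan_iff subsetD)+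
qed

lemma finite_star_edges: "finite (star_edges k t n)"
  unfolding star_edges_eq_image by simp

lemma card_star_edges: "card (star_edges k t n) = (n - t) choose (k - t)"
  unfolding star_edges_eq_image by (subst card_image[OF inj_on_star_union]) (simp add: n_subsets)

lemma lagrangian_star_edges:
  "lagrangian (star_edges k t n) z = (\<Prod>i<t. z i) * esym z {t..<n} (k - t)"
proof -
  have "lagrangian (star_edges k t n) z
      = (\<Sum>F\<in>{F. F \<subseteq> {t..<n} \<and> card F = k - t}. \<Prod>i\<in>{..<t} \<union> F. z i)"
    unfolding lagrangian_def star_edges_eq_image
    by (rule sum.reindex[OF inj_on_star_union, unfolded comp_def])
  also have "\<dots> = (\<Sum>F\<in>{F. F \<subseteq> {t..<n} \<and> card F = k - t}. (\<Prod>i<t. z i) * (\<Prod>i\<in>F. z i))"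
    by (rule sum.cong[OF refl], rule prod.union_disjoint) (auto dest: finite_subset)
  finally show ?thesis by (simp add: esym_def sum_distrib_left)
qed

lemma lagrangian_bounded_star_edges:
  "lagrangian_bounded n (star_edges k t n)
     (real ((n - t) choose (k - t)) * ((1 / real k) ^ k * (real (k - t) / real (n - t)) ^ (k - t)))"
  unfolding lagrangian_bounded_def
proof (intro allI impI)
  fix z :: "nat \<Rightarrow> real" assume z0: "\<forall>i. 0 \<le> z i" and zs: "(\<Sum>i<n. z i) = 1"
  define j where "j = k - t"
  define m where "m = n - t"
  define s where "s = (\<Sum>i\<in>{t..<n}. z i)"
  have total: "(\<Sum>i<t. z i) + s = 1"
    using zs sum.atLeastLessThan_concat[of 0 t n z] tk by (simp add: s_def lessThan_atLeast0)
  have s0: "s \<ge> 0" using z0 by (simp add: s_def sum_nonneg)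
  have "lagrangian (star_edges k t n) z = (\<Prod>i<t. z i) * esym z {t..<n} j"
    by (simp add: lagrangian_star_edges j_def)
  also have "\<dots> \<le> (\<Prod>i<t. z i) * (real (m choose j) * (s / real m) ^ j)"
    using esym_le_maclaurin[of "{t..<n}" z j] z0
    by (intro mult_left_mono) (auto simp: s_def m_def prod_nonneg)
  also have "\<dots> = real (m choose j) * ((\<Prod>i<t. z i) * (s / real j) ^ j) * (real j / real m) ^ j"
    by (cases "j = 0") (simp_all add: power_mult_distrib[symmetric])
  also have "\<dots> \<le> real (m choose j) * (1 / real k) ^ k * (real j / real m) ^ j"
    using prod_times_mean_power_le[of k t z s] tk z0 s0 total
    by (intro mult_right_mono mult_left_mono) (auto simp: j_def)
  finally show "lagrangian (star_edges k t n) z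
      \<le> real ((n - t) choose (k - t)) * ((1 / real k) ^ k * (real (k - t) / real (n - t)) ^ (k - t))"
    by (simp add: j_def m_def mult.assoc)
qed

context
  fixes \<alpha> :: real
  assumes al: "\<alpha> > 1"
begin

lemma alpha_norm_star_vector: "alpha_norm \<alpha> n (star_vector \<alpha> k t n) = 1"
proof -
  have z: "\<bar>star_vector \<alpha> k t n i\<bar> powr \<alpha> =
      (if i < t then 1 / real k else real (k - t) / (real k * real (n - t)))" for i
    using al by (simp add: star_vector_def powr_powr)
  have "(\<Sum>i<n. \<bar>star_vector \<alpha> k t n i\<bar> powr \<alpha>)
      = (\<Sum>i<t. \<bar>star_vector \<alpha> k t n i\<bar> powr \<alpha>) + (\<Sum>i\<in>{t..<n}. \<bar>star_vector \<alpha> k t n i\<bar> powr \<alpha>)"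
    using sum.atLeastLessThan_concat[of 0 t n "\<lambda>i. \<bar>star_vector \<alpha> k t n i\<bar> powr \<alpha>"] tk
    by (simp add: lessThan_atLeast0)
  also have "\<dots> = real t / real k + real (n - t) * (real (k - t) / (real k * real (n - t)))"
    by (simp add: z)
  also have "\<dots> = 1"
    using tk by (simp add: field_simps of_nat_diff)
  finally show ?thesis using alpha_norm_eq_1_iff al by simp
qed

lemma lagrangian_star_vector:
  "lagrangian (star_edges k t n) (star_vector \<alpha> k t n) =
     real ((n - t) choose (k - t)) * ((1 / real k) ^ k * (real (k - t) / real (n - t)) ^ (k - t)) powr (1 / \<alpha>)"
proof -
  define w where "w = real (k - t) / (real k * real (n - t))"
  have edge: "(\<Prod>i\<in>e. star_vector \<alpha> k t n i)
      = ((1 / real k) ^ k * (real (k - t) / real (n - t)) ^ (k - t)) powr (1 / \<alpha>)"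
    if "e \<in> star_edges k t n" for e
  proof -
    have e: "e \<subseteq> {..<n}" "card e = k" "{..<t} \<subseteq> e" using that by (auto simp: star_edges_def)
    then have fe: "finite e" using finite_subset by blast
    have "(\<Prod>i\<in>e. star_vector \<alpha> k t n i) = (\<Prod>i\<in>e. if i < t then 1 / real k else w) powr (1 / \<alpha>)"
      unfolding star_vector_def w_def by (simp add: prod_powr_distrib)
    also have "(\<Prod>i\<in>e. if i < t then 1 / real k else w) = (1 / real k) ^ t * w ^ (k - t)"
    proof -
      have "e = {..<t} \<union> (e - {..<t})" using e by auto
      then have "(\<Prod>i\<in>e. if i < t then 1 / real k else w)
          = (\<Prod>i<t. 1 / real k) * (\<Prod>i\<in>e - {..<t}. w)"
        using fe by (subst prod.subset_diff[OF e(3) fe]) (auto intro!: arg_cong2[where f="(*)"] prod.cong)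
      then show ?thesis using e fe by (simp add: card_Diff_subset)
    qed
    also have "w ^ (k - t) = (1 / real k) ^ (k - t) * (real (k - t) / real (n - t)) ^ (k - t)"
      by (simp add: w_def power_mult_distrib[symmetric])
    also have "(1 / real k) ^ t * ((1 / real k) ^ (k - t) * (real (k - t) / real (n - t)) ^ (k - t))
        = (1 / real k) ^ k * (real (k - t) / real (n - t)) ^ (k - t)"
      using tk by (simp add: mult.assoc power_add[symmetric])
    finally show ?thesis .
  qed
  show ?thesis
    using edge by (simp add: lagrangian_def card_star_edges)
qed

lemma lambda_alpha_star_edges:
  "lambda_alpha \<alpha> n k (star_edges k t n) =
     fact k * real ((n - t) choose (k - t)) * real k powr (- real k / \<alpha>)
     * ((real (k - t) / real (n - t)) ^ (k - t)) powr (1 / \<alpha>)"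
proof -
  define C where "C = real ((n - t) choose (k - t))"
  define R where "R = (real (k - t) / real (n - t)) ^ (k - t)"
  define M where "M = (1 / real k) ^ k * R"
  have C: "C > 0" using tk by (simp add: C_def)
  have R: "R \<ge> 0" by (simp add: R_def)
  have "fact k * (C powr (1 - 1 / \<alpha>) * (C * M) powr (1 / \<alpha>)) = fact k * C * M powr (1 / \<alpha>)"
    using C R by (simp add: M_def powr_mult mult_ac powr_add[symmetric])
  moreover have "M powr (1 / \<alpha>) = real k powr (- real k / \<alpha>) * R powr (1 / \<alpha>)"
    using tk R by (simp add: M_def powr_mult power_one_over powr_realpow[symmetric] powr_powr
        inverse_powr powr_minus divide_inverse)
  ultimately show ?thesis
    using lambda_alpha_bounds[OF al finite_star_edges lagrangian_bounded_star_edges alpha_norm_star_vector, of k]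
    by (simp add: lagrangian_star_vector card_star_edges C_def M_def R_def mult.assoc)
qed

end

end

section \<open>The hypergraph \<open>B\<^sub>n\<close>\<close>

lemma B_edges_eq_diff:
  "B_edges n = {F. F \<subseteq> {..<n} \<and> card F = 3} -
     ({F. F \<subseteq> {..<n div 2} \<and> card F = 3} \<union> {F. F \<subseteq> {n div 2..<n} \<and> card F = 3})"
proof (intro equalityI subsetI)
  fix F assume "F \<in> B_edges n"
  then have F: "F \<subseteq> {..<n}" "card F = 3" "F \<inter> {..<n div 2} \<noteq> {}" "F \<inter> {n div 2..<n} \<noteq> {}"
    by (auto simp: B_edges_def)
  moreover have "\<not> F \<subseteq> {..<n div 2}" using F(4) by auto
  moreover have "\<not> F \<subseteq> {n div 2..<n}" using F(3) by auto
  ultimately show "F \<in> {F. F \<subseteq> {..<n} \<and> card F = 3} -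
     ({F. F \<subseteq> {..<n div 2} \<and> card F = 3} \<union> {F. F \<subseteq> {n div 2..<n} \<and> card F = 3})"
    by auto
next
  fix F assume "F \<in> {F. F \<subseteq> {..<n} \<and> card F = 3} -
     ({F. F \<subseteq> {..<n div 2} \<and> card F = 3} \<union> {F. F \<subseteq> {n div 2..<n} \<and> card F = 3})"
  then have F: "F \<subseteq> {..<n}" "card F = 3" "\<not> F \<subseteq> {..<n div 2}" "\<not> F \<subseteq> {n div 2..<n}" by auto
  obtain x y where "x \<in> F" "x \<notin> {n div 2..<n}" "y \<in> F" "y \<notin> {..<n div 2}"
    using F(3,4) by blast
  then have "x \<in> F \<inter> {..<n div 2}" "y \<in> F \<inter> {n div 2..<n}" using F(1) by auto
  then have "F \<inter> {..<n div 2} \<noteq> {}" "F \<inter> {n div 2..<n} \<noteq> {}" by blast+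
  with F show "F \<in> B_edges n" by (auto simp: B_edges_def)
qed

lemma finite_B_edges: "finite (B_edges n)"
  by (rule finite_subset[of _ "Pow {..<n}"]) (auto simp: B_edges_def)

lemma lagrangian_B_edges_esym:
  "lagrangian (B_edges n) z = esym z {..<n} 3 - esym z {..<n div 2} 3 - esym z {n div 2..<n} 3"
proof -
  have disj: "{F. F \<subseteq> {..<n div 2} \<and> card F = 3} \<inter> {F. F \<subseteq> {n div 2..<n} \<and> card F = (3::nat)} = {}"
  proof (rule ccontr)
    assume "\<not> ?thesis"
    then obtain F where F: "F \<subseteq> {..<n div 2}" "F \<subseteq> {n div 2..<n}" "card F = 3" by blast
    then have "F = {}" by (meson atLeastLessThan_iff equals0I lessThan_iff not_le subsetD)
    with F(3) show False by simp
  qed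
  have sub: "{F. F \<subseteq> {..<n div 2} \<and> card F = 3} \<union> {F. F \<subseteq> {n div 2..<n} \<and> card F = 3}
      \<subseteq> {F. F \<subseteq> {..<n} \<and> card F = 3}" by auto
  show ?thesis unfolding lagrangian_def B_edges_eq_diff esym_def
    by (subst sum_diff[OF _ sub]) (simp, subst sum.union_disjoint, auto simp: disj)
qed

lemma lagrangian_B_edges:
  "6 * lagrangian (B_edges n) z =
     3 * sum z {..<n div 2} * sum z {n div 2..<n} * (sum z {..<n div 2} + sum z {n div 2..<n})
     - 3 * sum z {n div 2..<n} * (\<Sum>i\<in>{..<n div 2}. z i ^ 2)
     - 3 * sum z {..<n div 2} * (\<Sum>i\<in>{n div 2..<n}. z i ^ 2)"
proof -
  have split: "sum f {..<n} = sum f {..<n div 2} + sum f {n div 2..<n}" for f :: "nat \<Rightarrow> real"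
    using sum.atLeastLessThan_concat[of 0 "n div 2" n f] by (simp add: lessThan_atLeast0)
  define a where "a = sum z {..<n div 2}"
  define b where "b = sum z {n div 2..<n}"
  define pA where "pA = (\<Sum>i\<in>{..<n div 2}. z i ^ 2)"
  define pB where "pB = (\<Sum>i\<in>{n div 2..<n}. z i ^ 2)"
  define qA where "qA = (\<Sum>i\<in>{..<n div 2}. z i ^ 3)"
  define qB where "qB = (\<Sum>i\<in>{n div 2..<n}. z i ^ 3)"
  have "6 * esym z {..<n} 3 = (a + b)^3 - 3 * (a + b) * (pA + pB) + 2 * (qA + qB)"
    using esym_3[of "{..<n}" z] by (simp add: split a_def b_def pA_def pB_def qA_def qB_def)
  moreover have "6 * esym z {..<n div 2} 3 = a^3 - 3 * a * pA + 2 * qA"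
    using esym_3[of "{..<n div 2}" z] by (simp add: a_def pA_def qA_def)
  moreover have "6 * esym z {n div 2..<n} 3 = b^3 - 3 * b * pB + 2 * qB"
    using esym_3[of "{n div 2..<n}" z] by (simp add: b_def pB_def qB_def)
  ultimately have "6 * lagrangian (B_edges n) z = 3 * a * b * (a + b) - 3 * b * pA - 3 * a * pB"
    unfolding lagrangian_B_edges_esym by (simp add: algebra_simps power3_eq_cube)
  then show ?thesis by (simp add: a_def b_def pA_def pB_def)
qed

lemma card_B_edges:
  "6 * real (card (B_edges n)) = 3 * real (n div 2) * real (n - n div 2) * (real n - 2)"
proof -
  have "6 * real (card (B_edges n)) =
     3 * real (n div 2) * real (n - n div 2) * (real (n div 2) + real (n - n div 2))
     - 3 * real (n - n div 2) * real (n div 2) - 3 * real (n div 2) * real (n - n div 2)"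
  proof -
    have "lagrangian (B_edges n) (\<lambda>_. 1) = real (card (B_edges n))" by (simp add: lagrangian_def)
    moreover have "card {n div 2..<n} = n - n div 2" by simp
    ultimately show ?thesis using lagrangian_B_edges[of n "\<lambda>_. 1"] by (simp only:) simp
  qed
  moreover have "real (n div 2) + real (n - n div 2) = real n" by (simp flip: of_nat_add)
  ultimately show ?thesis by (simp add: algebra_simps)
qed

text \<open>With \<open>a + b = 1\<close>, Cauchy-Schwarz on each part and \<open>ab \<le> 1/4\<close>.\<close>
lemma lagrangian_bounded_B_edges:
  assumes "n \<ge> 2"
  shows "lagrangian_bounded n (B_edges n) (1/8 * (1 - 1 / real (n - n div 2)))"
  unfolding lagrangian_bounded_def
proof (intro allI impI)
  fix z :: "nat \<Rightarrow> real" assume z0: "\<forall>i. 0 \<le> z i" and zs: "(\<Sum>i<n. z i) = 1"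
  define nB where "nB = real (n - n div 2)"
  define a where "a = sum z {..<n div 2}"
  define b where "b = sum z {n div 2..<n}"
  have nB: "nB \<ge> 1" "real (n div 2) \<le> nB" using assms by (auto simp: nB_def)
  have ab: "a + b = 1"
    using zs sum.atLeastLessThan_concat[of 0 "n div 2" n z] by (simp add: a_def b_def lessThan_atLeast0)
  have a0: "a \<ge> 0" and b0: "b \<ge> 0" using z0 by (auto simp: a_def b_def sum_nonneg)
  have pA: "a^2 / nB \<le> (\<Sum>i\<in>{..<n div 2}. z i ^ 2)"
    unfolding a_def by (rule sum_squared_div_le_sum_of_squares) (use nB in auto)
  have pB: "b^2 / nB \<le> (\<Sum>i\<in>{n div 2..<n}. z i ^ 2)"
    unfolding b_def by (rule sum_squared_div_le_sum_of_squares) (use nB in \<open>auto simp: nB_def\<close>)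
  have "6 * lagrangian (B_edges n) z \<le> 3 * a * b - 3 * b * (a^2 / nB) - 3 * a * (b^2 / nB)"
    using lagrangian_B_edges[of n z] mult_left_mono[OF pA b0] mult_left_mono[OF pB a0] ab
    by (simp add: a_def b_def)
  also have "\<dots> = 3 * (a * b) * (1 - (a + b) / nB)"
    using nB by (simp add: field_simps power2_eq_square)
  also have "\<dots> = 3 * (a * b) * (1 - 1 / nB)"
    by (simp add: ab)
  also have "\<dots> \<le> 3 * (1/4) * (1 - 1 / nB)"
  proof -
    have "(a + b)^2 - 4 * (a * b) = (a - b)^2" by (simp add: power2_eq_square algebra_simps)
    then have "4 * (a * b) \<le> (a + b)^2" by (metis diff_ge_0_iff_ge zero_le_power2)
    then have "a * b \<le> 1/4" using ab by simp
    then show ?thesis using nB by (intro mult_right_mono) auto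
  qed
  finally show "lagrangian (B_edges n) z \<le> 1/8 * (1 - 1 / real (n - n div 2))"
    by (simp add: nB_def)
qed

text \<open>The case \<open>n = 2x + 1\<close> of the next lemma.\<close>
lemma B_odd_ineq:
  fixes x :: real assumes x1: "x \<ge> 1"
  shows "1/8 * (1 - 1/(x+1)) * (2*x+1)^3 \<le> x * (x+1) * (2*x-1) / 2 * (1 + 8/(2*x+1)^2)"
proof -
  have p: "4*(x+1)^2*(2*x-1)*((2*x+1)^2+8) - (2*x+1)^5 = 40*x^3+52*x^2-26*x-37"
    by (simp add: algebra_simps power2_eq_square power3_eq_cube eval_nat_numeral)
  have "x \<le> x * x" using mult_right_mono[OF x1, of x] x1 by simp
  moreover have "x * x \<le> x * (x * x)" using mult_right_mono[OF x1, of "x * x"] x1 by simp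
  ultimately have "x^2 \<ge> x" "x^3 \<ge> x" by (simp_all add: power2_eq_square power3_eq_cube)
  then have q: "(2*x) * (2*x+1)^5 \<le> (2*x) * (4*(x+1)^2*(2*x-1)*((2*x+1)^2+8))"
    using p x1 by (intro mult_left_mono) auto
  have d: "2*x+1 > 0" "x + 1 > 0" using x1 by auto
  define P where "P = 8*(x+1)"
  define Q where "Q = 2*(2*x+1)^2"
  have P: "P > 0" and Q: "Q > 0" using d by (simp_all add: P_def Q_def)
  have "1/8 * (1 - 1/(x+1)) * (2*x+1)^3 = x * (2*x+1)^3 / P"
    using d by (simp add: P_def field_simps)
  also have "\<dots> = (x * (2*x+1)^3 * Q) / (P * Q)"
    using Q by simp
  also have "x * (2*x+1)^3 * Q = (2*x) * (2*x+1)^5"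
    by (simp add: Q_def algebra_simps eval_nat_numeral)
  also have "(2*x) * (2*x+1)^5 / (P * Q) \<le> (2*x) * (4*(x+1)^2*(2*x-1)*((2*x+1)^2+8)) / (P * Q)"
    using q P Q by (intro divide_right_mono) auto
  also have "(2*x) * (4*(x+1)^2*(2*x-1)*((2*x+1)^2+8)) = x * (x+1) * (2*x-1) * ((2*x+1)^2+8) * P"
    by (simp add: P_def algebra_simps power2_eq_square)
  also have "\<dots> / (P * Q) = x * (x+1) * (2*x-1) / 2 * (1 + 8/(2*x+1)^2)"
    using P d by (simp add: Q_def field_simps)
  finally show ?thesis .
qed

lemma B_edges_near_uniform:
  assumes "n \<ge> 3"
  shows "1/8 * (1 - 1 / real (n - n div 2)) * real n ^ 3 \<le> real (card (B_edges n)) * (1 + 8 / real n ^ 2)"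
proof -
  have card: "real (card (B_edges n)) = real (n div 2) * real (n - n div 2) * (real n - 2) / 2"
    using card_B_edges[of n] by (simp del: of_nat_diff add: mult_ac)
  obtain m where "n = 2 * m \<or> n = 2 * m + 1" by (metis dvd_mult_div_cancel odd_two_times_div_two_succ)
  then show ?thesis
  proof
    assume n: "n = 2 * m"
    then have m: "real m \<ge> 2" using assms by simp
    have "1/8 * (1 - 1 / real m) * (2 * real m) ^ 3 = real m * real m * (2 * real m - 2) / 2"
      using m by (simp add: field_simps eval_nat_numeral)
    also have "\<dots> \<le> real m * real m * (2 * real m - 2) / 2 * (1 + 8 / (2 * real m) ^ 2)"
      using m by simp
    finally show ?thesis unfolding card using n by simp
  next
    assume n: "n = 2 * m + 1"
    then have parts: "n div 2 = m" "n - n div 2 = m + 1" and "real m \<ge> 1" using assms by auto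
    then show ?thesis
      using B_odd_ineq[of "real m"] unfolding card parts by (simp add: n add.commute)
  qed
qed

section \<open>Turan graphs\<close>

definition turan_part :: "nat \<Rightarrow> nat \<Rightarrow> nat \<Rightarrow> nat set" where
  "turan_part r n p = {i. i < n \<and> i mod r = p}"

lemma finite_turan_part: "finite (turan_part r n p)"
  by (simp add: turan_part_def)

context
  fixes r :: nat assumes r: "r > 0"
begin

lemma sum_turan_parts: "(\<Sum>i<n. f i) = (\<Sum>p<r. \<Sum>i\<in>turan_part r n p. f i)"
proof -
  have "{..<n} = (\<Union>p\<in>{..<r}. turan_part r n p)" using r by (auto simp: turan_part_def)
  then have "(\<Sum>i<n. f i) = sum f (\<Union>p\<in>{..<r}. turan_part r n p)" by simp
  also have "\<dots> = (\<Sum>p<r. sum f (turan_part r n p))"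
    by (rule sum.UNION_disjoint) (auto simp: finite_turan_part turan_part_def)
  finally show ?thesis .
qed

lemma turan_edges_eq_diff:
  "turan_edges r n = {F. F \<subseteq> {..<n} \<and> card F = 2} -
     (\<Union>p\<in>{..<r}. {F. F \<subseteq> turan_part r n p \<and> card F = 2})"
proof (intro equalityI subsetI)
  fix F assume "F \<in> turan_edges r n"
  then obtain i j where F: "F \<subseteq> {..<n}" "card F = 2" "i \<in> F" "j \<in> F" "i mod r \<noteq> j mod r"
    by (auto simp: turan_edges_def)
  then have "\<not> F \<subseteq> turan_part r n p" for p by (auto simp: turan_part_def)
  with F show "F \<in> {F. F \<subseteq> {..<n} \<and> card F = 2} - (\<Union>p\<in>{..<r}. {F. F \<subseteq> turan_part r n p \<and> card F = 2})"
    by auto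
next
  fix F assume "F \<in> {F. F \<subseteq> {..<n} \<and> card F = 2} - (\<Union>p\<in>{..<r}. {F. F \<subseteq> turan_part r n p \<and> card F = 2})"
  then have F: "F \<subseteq> {..<n}" "card F = 2" and not_in_part: "\<And>p. p < r \<Longrightarrow> \<not> F \<subseteq> turan_part r n p"
    by auto
  obtain i where i: "i \<in> F" using F(2) by fastforce
  have "\<not> F \<subseteq> turan_part r n (i mod r)" using r by (intro not_in_part) simp
  then obtain j where "j \<in> F" "j mod r \<noteq> i mod r" using F(1) by (auto simp: turan_part_def)
  with F i show "F \<in> turan_edges r n" unfolding turan_edges_def by auto
qed

lemma finite_turan_edges: "finite (turan_edges r n)"
  by (rule finite_subset[of _ "Pow {..<n}"]) (auto simp: turan_edges_def)

lemma lagrangian_turan_edges_esym: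
  "lagrangian (turan_edges r n) z = esym z {..<n} 2 - (\<Sum>p<r. esym z (turan_part r n p) 2)"
proof -
  have sub: "(\<Union>p\<in>{..<r}. {F. F \<subseteq> turan_part r n p \<and> card F = 2}) \<subseteq> {F. F \<subseteq> {..<n} \<and> card F = 2}"
    by (auto simp: turan_part_def)
  have disj: "{F. F \<subseteq> turan_part r n p \<and> card F = 2} \<inter> {F. F \<subseteq> turan_part r n q \<and> card F = (2::nat)} = {}"
    if "p \<noteq> q" for p q
  proof (rule ccontr)
    assume "\<not> ?thesis"
    then obtain F where F: "F \<subseteq> turan_part r n p" "F \<subseteq> turan_part r n q" "card F = 2" by blast
    then have "F \<subseteq> turan_part r n p \<inter> turan_part r n q" by auto
    also have "\<dots> = {}" using that by (auto simp: turan_part_def)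
    finally show False using F(3) by simp
  qed
  have "(\<Sum>F\<in>(\<Union>p\<in>{..<r}. {F. F \<subseteq> turan_part r n p \<and> card F = 2}). \<Prod>i\<in>F. z i)
      = (\<Sum>p<r. esym z (turan_part r n p) 2)"
    unfolding esym_def by (rule sum.UNION_disjoint) (auto simp: finite_turan_part disj)
  then show ?thesis unfolding lagrangian_def turan_edges_eq_diff esym_def
    by (subst sum_diff[OF _ sub]) auto
qed

lemma lagrangian_turan_edges:
  "2 * lagrangian (turan_edges r n) z = (\<Sum>i<n. z i)^2 - (\<Sum>p<r. (sum z (turan_part r n p))^2)"
proof -
  have "2 * lagrangian (turan_edges r n) z
      = 2 * esym z {..<n} 2 - (\<Sum>p<r. 2 * esym z (turan_part r n p) 2)"
    by (simp add: lagrangian_turan_edges_esym sum_distrib_left)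
  also have "\<dots> = ((\<Sum>i<n. z i)^2 - (\<Sum>i<n. z i ^ 2))
      - (\<Sum>p<r. (sum z (turan_part r n p))^2 - (\<Sum>i\<in>turan_part r n p. z i ^ 2))"
    by (simp add: esym_2 finite_turan_part)
  also have "\<dots> = (\<Sum>i<n. z i)^2 - (\<Sum>p<r. (sum z (turan_part r n p))^2)"
    by (simp add: sum_subtractf sum_turan_parts[of "\<lambda>i. z i ^ 2"])
  finally show ?thesis .
qed

lemma lagrangian_bounded_turan_edges: "lagrangian_bounded n (turan_edges r n) ((1 - 1 / real r) / 2)"
  unfolding lagrangian_bounded_def
proof (intro allI impI)
  fix z :: "nat \<Rightarrow> real" assume "\<forall>i. 0 \<le> z i" and zs: "(\<Sum>i<n. z i) = 1"
  have "(\<Sum>p<r. sum z (turan_part r n p)) = 1" using zs sum_turan_parts[of z] by simp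
  then have "1 / real r \<le> (\<Sum>p<r. (sum z (turan_part r n p))^2)"
    using sum_squared_div_le_sum_of_squares[of "real r" "{..<r}" "\<lambda>p. sum z (turan_part r n p)"] r
    by simp
  then show "lagrangian (turan_edges r n) z \<le> (1 - 1 / real r) / 2"
    using lagrangian_turan_edges[of n z] zs by simp
qed

lemma card_turan_edges:
  "2 * real (card (turan_edges r n)) = real n ^ 2 - (\<Sum>p<r. real (card (turan_part r n p)) ^ 2)"
  using lagrangian_turan_edges[of n "\<lambda>_. 1"] by (simp add: lagrangian_def)

lemma card_turan_part_bounds:
  assumes p: "p < r"
  shows "n div r \<le> card (turan_part r n p)" "card (turan_part r n p) \<le> n div r + 1"
proof -
  have "inj_on (\<lambda>i. i div r) (turan_part r n p)"
  proof (rule inj_onI)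
    fix i j assume "i \<in> turan_part r n p" "j \<in> turan_part r n p" "i div r = j div r"
    then have m: "i mod r = j mod r" and d: "i div r = j div r" by (auto simp: turan_part_def)
    have "i = i div r * r + i mod r" by (rule div_mult_mod_eq[symmetric])
    also have "\<dots> = j" unfolding m d by (rule div_mult_mod_eq)
    finally show "i = j" .
  qed
  moreover have "(\<lambda>i. i div r) ` turan_part r n p \<subseteq> {..n div r}"
    by (auto simp: turan_part_def div_le_mono)
  ultimately have "card (turan_part r n p) \<le> card {..n div r}"
    using card_mono[of "{..n div r}" "(\<lambda>i. i div r) ` turan_part r n p"]
      card_image[of "\<lambda>i. i div r" "turan_part r n p"] by simp
  then show "card (turan_part r n p) \<le> n div r + 1" by simp
  have "(\<lambda>q. q * r + p) ` {..<n div r} \<subseteq> turan_part r n p"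
  proof
    fix i assume "i \<in> (\<lambda>q. q * r + p) ` {..<n div r}"
    then obtain q where q: "q < n div r" "i = q * r + p" by auto
    have "(q + 1) * r \<le> (n div r) * r" using q(1) by (intro mult_right_mono) auto
    also have "\<dots> \<le> n" by (simp add: div_times_less_eq_dividend)
    finally have "q * r + p < n" using p by simp
    moreover have "(q * r + p) mod r = p" using p by simp
    ultimately show "i \<in> turan_part r n p" using q by (simp add: turan_part_def)
  qed
  moreover have "inj_on (\<lambda>q. q * r + p) {..<n div r}" using r by (auto simp: inj_on_def)
  ultimately have "card {..<n div r} \<le> card (turan_part r n p)"
    using card_mono[OF finite_turan_part, of "(\<lambda>q. q * r + p) ` {..<n div r}" r n p]
      card_image[of "\<lambda>q. q * r + p" "{..<n div r}"] by simp
  then show "n div r \<le> card (turan_part r n p)" by simp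
qed

text \<open>The part sizes differ from the mean \<open>n/r\<close> by at most 1, so their variance is at most \<open>r\<close>.\<close>
lemma sum_card_turan_part_squared_le:
  "(\<Sum>p<r. real (card (turan_part r n p)) ^ 2) \<le> real n ^ 2 / real r + real r"
proof -
  define c where "c p = real (card (turan_part r n p))" for p
  define u where "u = real n / real r"
  have sc: "(\<Sum>p<r. c p) = real n" using sum_turan_parts[of "\<lambda>_. 1::real" n] by (simp add: c_def)
  have "real n = real (n div r) * real r + real (n mod r)"
    by (metis div_mult_mod_eq of_nat_add of_nat_mult)
  moreover have "real (n mod r) < real r" using r by simp
  ultimately have u: "real (n div r) \<le> u" "u \<le> real (n div r) + 1"
    using r by (simp_all add: u_def field_simps)
  have dev: "(c p - u)^2 \<le> 1" if "p < r" for p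
  proof -
    have "real (n div r) \<le> c p" "c p \<le> real (n div r) + 1"
      using card_turan_part_bounds[OF that, of n] by (simp_all add: c_def)
    then have "\<bar>c p - u\<bar> \<le> 1" using u by linarith
    then have "\<bar>c p - u\<bar>^2 \<le> 1" by (intro power_le_one) auto
    then show ?thesis by simp
  qed
  have "(\<Sum>p<r. (c p - u)^2) = (\<Sum>p<r. c p ^ 2) - 2 * u * (\<Sum>p<r. c p) + real r * u^2"
    by (simp add: power2_diff sum_subtractf sum.distrib sum_distrib_left algebra_simps)
  also have "\<dots> = (\<Sum>p<r. c p ^ 2) - real n ^ 2 / real r"
    unfolding sc u_def using r by (simp add: field_simps power2_eq_square)
  finally have "(\<Sum>p<r. c p ^ 2) = real n ^ 2 / real r + (\<Sum>p<r. (c p - u)^2)" by simp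
  also have "\<dots> \<le> real n ^ 2 / real r + real r"
    using sum_mono[of "{..<r}" "\<lambda>p. (c p - u)^2" "\<lambda>_. 1"] dev by simp
  finally show ?thesis unfolding c_def .
qed

end

lemma turan_edges_near_uniform:
  assumes r: "r \<ge> 2" and n: "n \<ge> 2 * r"
  shows "card (turan_edges r n) > 0"
    and "(1 - 1 / real r) / 2 * real n ^ 2 \<le> real (card (turan_edges r n)) * (1 + 4 * real r / real n ^ 2)"
proof -
  define N where "N = real (card (turan_edges r n))"
  have rr: "real r \<ge> 2" and nr: "real n \<ge> 2 * real r" using r n by linarith+
  have n2: "real n ^ 2 \<ge> 4 * real r"
  proof -
    have "real n ^ 2 \<ge> (2 * real r)^2" using nr rr by (intro power_mono) auto
    moreover have "(2 * real r)^2 \<ge> 4 * real r" using rr by (simp add: power2_eq_square)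
    ultimately show ?thesis by linarith
  qed
  have twoN: "2 * N \<ge> real n ^ 2 * (1 - 1 / real r) - real r"
    using card_turan_edges[of r n] sum_card_turan_part_squared_le[of r n] r
    by (simp add: N_def right_diff_distrib)
  have "real n ^ 2 * (1/2) \<le> real n ^ 2 * (1 - 1 / real r)"
    using rr by (intro mult_left_mono) (auto simp: field_simps)
  then have Nq: "2 * N \<ge> real n ^ 2 / 4" using twoN n2 by linarith
  then show "card (turan_edges r n) > 0" using n2 rr by (simp add: N_def)
  have "N * (4 * real r / real n ^ 2) = (2 * N) * (2 * real r / real n ^ 2)" by (simp add: field_simps)
  also have "\<dots> \<ge> (real n ^ 2 / 4) * (2 * real r / real n ^ 2)"
    using Nq rr by (intro mult_right_mono) auto
  also have "(real n ^ 2 / 4) * (2 * real r / real n ^ 2) = real r / 2" using nr rr by (simp add: field_simps)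
  finally show "(1 - 1 / real r) / 2 * real n ^ 2 \<le> N * (1 + 4 * real r / real n ^ 2)"
    using twoN by (simp add: field_simps)
qed

section \<open>Asymptotics for \<open>B\<^sub>n\<close> and \<open>T\<^sub>r\<^sub>,\<^sub>n\<close>\<close>

lemma lambda_alpha_B_edges_asymp:
  fixes \<alpha> :: real
  assumes "\<alpha> > 1"
  shows "\<exists>g :: nat \<Rightarrow> real. g \<in> O(\<lambda>n. 1 / real n ^ 2) \<and>
           (\<forall>\<^sub>F n in sequentially. lambda_alpha \<alpha> n 3 (B_edges n) =
              (1 + g n) * (6 * real (card (B_edges n)) * real n powr (- 3 / \<alpha>)))"
proof -
  have "\<exists>g. g \<in> O(\<lambda>n. 1 / real n ^ 2) \<and> (\<forall>\<^sub>F n in sequentially. lambda_alpha \<alpha> n 3 (B_edges n) =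
           (1 + g n) * (fact 3 * real (card (B_edges n)) * real n powr (- real 3 / \<alpha>)))"
  proof (rule lambda_alpha_asymp_near_uniform[OF assms, of 8 3])
    fix n :: nat assume n: "n \<ge> 3"
    have "6 * real (card (B_edges n)) > 0"
      unfolding card_B_edges using n by (intro mult_pos_pos) auto
    then show "n > 0 \<and> finite (B_edges n) \<and> (\<forall>e\<in>B_edges n. card e = 3) \<and> card (B_edges n) > 0
        \<and> lagrangian_bounded n (B_edges n) (1/8 * (1 - 1 / real (n - n div 2)))
        \<and> 1/8 * (1 - 1 / real (n - n div 2)) \<ge> 0
        \<and> 1/8 * (1 - 1 / real (n - n div 2)) * real n ^ 3 \<le> real (card (B_edges n)) * (1 + 8 / real n ^ 2)"
      using n finite_B_edges lagrangian_bounded_B_edges B_edges_near_uniform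
      by (auto simp: B_edges_def)
  qed simp
  moreover have "fact 3 = (6::real)" by (simp add: fact_numeral)
  ultimately show ?thesis by simp
qed

lemma lambda_alpha_turan_edges_asymp:
  fixes \<alpha> :: real
  assumes "\<alpha> > 1" and r: "r \<ge> 2"
  shows "\<exists>g :: nat \<Rightarrow> real. g \<in> O(\<lambda>n. 1 / real n ^ 2) \<and>
           (\<forall>\<^sub>F n in sequentially. lambda_alpha \<alpha> n 2 (turan_edges r n) =
              (1 + g n) * (2 * real (card (turan_edges r n)) * real n powr (- 2 / \<alpha>)))"
proof -
  have "\<exists>g. g \<in> O(\<lambda>n. 1 / real n ^ 2) \<and> (\<forall>\<^sub>F n in sequentially. lambda_alpha \<alpha> n 2 (turan_edges r n) =
           (1 + g n) * (fact 2 * real (card (turan_edges r n)) * real n powr (- real 2 / \<alpha>)))"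
  proof (rule lambda_alpha_asymp_near_uniform[OF assms(1), of "4 * real r" "2 * r"])
    fix n :: nat assume n: "n \<ge> 2 * r"
    then show "n > 0 \<and> finite (turan_edges r n) \<and> (\<forall>e\<in>turan_edges r n. card e = 2)
        \<and> card (turan_edges r n) > 0
        \<and> lagrangian_bounded n (turan_edges r n) ((1 - 1 / real r) / 2) \<and> (1 - 1 / real r) / 2 \<ge> 0
        \<and> (1 - 1 / real r) / 2 * real n ^ 2 \<le> real (card (turan_edges r n)) * (1 + 4 * real r / real n ^ 2)"
      using r finite_turan_edges lagrangian_bounded_turan_edges turan_edges_near_uniform[OF r n]
      by (auto simp: turan_edges_def)
  qed simp
  then show ?thesis by (simp add: fact_numeral)
qed

theorem lemma13:
  fixes \<alpha> :: real
  assumes "\<alpha> > 1"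
  shows "(\<forall>t k n::nat. 1 \<le> t \<and> t \<le> k \<and> k \<le> n \<and> t < n \<longrightarrow>
            lambda_alpha \<alpha> n k (star_edges k t n) =
              fact k * real ((n - t) choose (k - t)) * real k powr (- real k / \<alpha>)
              * ((real (k - t) / real (n - t)) ^ (k - t)) powr (1 / \<alpha>))
       \<and> (\<exists>g :: nat \<Rightarrow> real. g \<in> O(\<lambda>n. 1 / real n ^ 2) \<and>
            (\<forall>\<^sub>F n in sequentially. lambda_alpha \<alpha> n 3 (B_edges n) =
               (1 + g n) * (6 * real (card (B_edges n)) * real n powr (- 3 / \<alpha>))))
       \<and> (\<forall>r::nat. r \<ge> 2 \<longrightarrow> (\<exists>g :: nat \<Rightarrow> real. g \<in> O(\<lambda>n. 1 / real n ^ 2) \<and>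
            (\<forall>\<^sub>F n in sequentially. lambda_alpha \<alpha> n 2 (turan_edges r n) =
               (1 + g n) * (2 * real (card (turan_edges r n)) * real n powr (- 2 / \<alpha>)))))"
  using lambda_alpha_star_edges[OF _ _ _ _ assms] lambda_alpha_B_edges_asymp[OF assms]
    lambda_alpha_turan_edges_asymp[OF assms]
  by blast

end
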